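(* Let $A$ be a finite skew brace such that $\Lambda(A)$ has exactly one vertex and $\ker\lambda\cap\operatorname{Fix}(A)=\{0\}$. Then $(\operatorname{Fix}(A),+)$ is an abelian group of odd order, $\operatorname{Fix}(A)$ is a trivial skew brace, and $A$ is isomorphic to the skew brace on $\operatorname{Fix}(A)\times\mathbb{Z}/2\mathbb{Z}$ with operations \[(f_1,k_1)+(f_2,k_2)=\big(f_1+(-1)^{k_1}f_2,\,k_1+k_2\big),\qquad (f_1,k_1)\circ(f_2,k_2)=\big((-1)^{k_2}f_1+(-1)^{k_1}f_2,\,k_1+k_2\big).\] Conversely, if $F$ is a non-trivial abelian group of odd order, then $A=F\times\mathbb{Z}/2\mathbb{Z}$ with these operations is a skew brace with $\operatorname{Fix}(A)=F\times\{0\}$, $\ker\lambda=\{0\}\times\mathbb{Z}/2\mathbb{Z}$, and $\Lambda(A)$ has exactly one vertex.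
   Context: A skew brace is a triple $(A,+,\circ)$ where $(A,+)$ and $(A,\circ)$ are groups with $a\circ(b+c)=a\circ b-a+a\circ c$. $\lambda_a(b)=-a+a\circ b$ gives a homomorphism $\lambda\colon(A,\circ)\to\operatorname{Aut}(A,+)$ with kernel $\ker\lambda$. $\operatorname{Fix}(A)=\{a\in A:\lambda_x(a)=a\ \forall x\in A\}$. A trivial skew brace is one with $a+b=a\circ b$ for all $a,b$. $\Lambda(A)$ is the graph whose vertices are the $\lambda$-orbits of size $>1$, two distinct vertices $L_1,L_2$ adjacent iff $\gcd(|L_1|,|L_2|)\ne1$. *)

theory Defs
  imports "HOL-Algebra.Algebra"
begin

text \<open>A skew brace is given by two group structures P = (A,+) and C = (A,\<circ>)
  (HOL-Algebra monoid records) on the same carrier, satisfying the brace compatibility law.\<close>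

definition skew_brace :: "('a, 'm) monoid_scheme \<Rightarrow> ('a, 'n) monoid_scheme \<Rightarrow> bool" where
  "skew_brace P C \<longleftrightarrow> group P \<and> group C \<and> carrier P = carrier C \<and>
     (\<forall>a\<in>carrier C. \<forall>b\<in>carrier C. \<forall>c\<in>carrier C.
        a \<otimes>\<^bsub>C\<^esub> (b \<otimes>\<^bsub>P\<^esub> c)
          = (a \<otimes>\<^bsub>C\<^esub> b) \<otimes>\<^bsub>P\<^esub> inv\<^bsub>P\<^esub> a \<otimes>\<^bsub>P\<^esub> (a \<otimes>\<^bsub>C\<^esub> c))"

definition trivial_skew_brace :: "('a, 'm) monoid_scheme \<Rightarrow> ('a, 'n) monoid_scheme \<Rightarrow> bool" where
  "trivial_skew_brace P C \<longleftrightarrow> skew_brace P C \<and>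
     (\<forall>a\<in>carrier P. \<forall>b\<in>carrier P. a \<otimes>\<^bsub>P\<^esub> b = a \<otimes>\<^bsub>C\<^esub> b)"

definition brace_lambda :: "('a, 'm) monoid_scheme \<Rightarrow> ('a, 'n) monoid_scheme \<Rightarrow> 'a \<Rightarrow> 'a \<Rightarrow> 'a" where
  "brace_lambda P C a b = inv\<^bsub>P\<^esub> a \<otimes>\<^bsub>P\<^esub> (a \<otimes>\<^bsub>C\<^esub> b)"

definition brace_ker :: "('a, 'm) monoid_scheme \<Rightarrow> ('a, 'n) monoid_scheme \<Rightarrow> 'a set" where
  "brace_ker P C = {a \<in> carrier C. \<forall>b\<in>carrier P. brace_lambda P C a b = b}"

definition brace_Fix :: "('a, 'm) monoid_scheme \<Rightarrow> ('a, 'n) monoid_scheme \<Rightarrow> 'a set" where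
  "brace_Fix P C = {a \<in> carrier P. \<forall>x\<in>carrier C. brace_lambda P C x a = a}"

definition lambda_orbits :: "('a, 'm) monoid_scheme \<Rightarrow> ('a, 'n) monoid_scheme \<Rightarrow> 'a set set" where
  "lambda_orbits P C = (\<lambda>b. (\<lambda>a. brace_lambda P C a b) ` carrier C) ` carrier P"

definition Lambda_vertices :: "('a, 'm) monoid_scheme \<Rightarrow> ('a, 'n) monoid_scheme \<Rightarrow> 'a set set" where
  "Lambda_vertices P C = {L \<in> lambda_orbits P C. card L > 1}"

definition Lambda_adj :: "('a, 'm) monoid_scheme \<Rightarrow> ('a, 'n) monoid_scheme \<Rightarrow> 'a set \<Rightarrow> 'a set \<Rightarrow> bool" where
  "Lambda_adj P C L1 L2 \<longleftrightarrow> L1 \<in> Lambda_vertices P C \<and> L2 \<in> Lambda_vertices P C \<and> L1 \<noteq> L2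
     \<and> gcd (card L1) (card L2) \<noteq> 1"

definition skew_brace_iso ::
  "('a, 'm) monoid_scheme \<Rightarrow> ('a, 'n) monoid_scheme \<Rightarrow> ('b, 'k) monoid_scheme \<Rightarrow> ('b, 'l) monoid_scheme
     \<Rightarrow> ('a \<Rightarrow> 'b) \<Rightarrow> bool" where
  "skew_brace_iso P C P' C' f \<longleftrightarrow> bij_betw f (carrier P) (carrier P') \<and>
     f \<in> hom P P' \<and> f \<in> hom C C'"

text \<open>Z/2Z is modelled by bool (True = 1, addition = xor); (-1)^k f.\<close>
definition sgn_act :: "('a, 'm) monoid_scheme \<Rightarrow> bool \<Rightarrow> 'a \<Rightarrow> 'a" where
  "sgn_act G k f = (if k then inv\<^bsub>G\<^esub> f else f)"

definition model_add :: "('a, 'm) monoid_scheme \<Rightarrow> ('a \<times> bool) monoid" where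
  "model_add G = \<lparr> carrier = carrier G \<times> (UNIV :: bool set),
     monoid.mult = (\<lambda>(f1, k1) (f2, k2). (f1 \<otimes>\<^bsub>G\<^esub> sgn_act G k1 f2, k1 \<noteq> k2)),
     monoid.one = (\<one>\<^bsub>G\<^esub>, False) \<rparr>"

definition model_comp :: "('a, 'm) monoid_scheme \<Rightarrow> ('a \<times> bool) monoid" where
  "model_comp G = \<lparr> carrier = carrier G \<times> (UNIV :: bool set),
     monoid.mult = (\<lambda>(f1, k1) (f2, k2). (sgn_act G k2 f1 \<otimes>\<^bsub>G\<^esub> sgn_act G k1 f2, k1 \<noteq> k2)),
     monoid.one = (\<one>\<^bsub>G\<^esub>, False) \<rparr>"

end

theory Submission
  imports Defs
begin

text \<open>Write F for Fix(A) and K for ker \<lambda>. The \<lambda>-orbit of a fixed point is a singleton and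
  \<lambda> preserves A - F, so the only vertex of \<Lambda>(A) is A - F, a single orbit of the action of
  (A, \<circ>). Orbit-stabiliser together with |F| dividing |A| forces |A - F| = |F| and point
  stabilisers of order 2. Then A - F is a coset y + F, and since each \<lambda>_a is additive every
  such stabiliser is K, so K = {0, \<tau>}. Being normal in (A, \<circ>), K is central there, which
  gives \<lambda>_f(\<tau>) = -f + \<tau> + f for f in F. The element \<tau> + \<lambda>_f(\<tau>) lies in F, is
  inverted by conjugation with \<tau>, and depends injectively on f because K \<inter> F = 0; hence
  conjugation by \<tau> inverts all of F. So F is abelian, \<tau> + \<lambda>_f(\<tau>) = f + f, doubling is
  injective, |F| is odd, and f + k\<tau> \<mapsto> (f, k) identifies A with the model.

  Conversely, in the model \<lambda>_(f,k) fixes (g, 0) and maps (g, 1) to (t + t + g, 1) with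
  t = \<plusminus>f; since doubling is bijective on an abelian group of odd order, this determines
  Fix, ker \<lambda> and the unique non-trivial orbit F \<times> {1}.\<close>

section \<open>Groups of odd order\<close>

lemma (in group) inv_mult_cancel_left [simp]:
  "\<lbrakk>x \<in> carrier G; y \<in> carrier G\<rbrakk> \<Longrightarrow> inv x \<otimes> (x \<otimes> y) = y"
  by (simp add: m_assoc[symmetric])

lemma (in group) mult_inv_cancel_left [simp]:
  "\<lbrakk>x \<in> carrier G; y \<in> carrier G\<rbrakk> \<Longrightarrow> x \<otimes> (inv x \<otimes> y) = y"
  by (simp add: m_assoc[symmetric])

lemma (in group) odd_order_if_inj_square:
  assumes fin: "finite (carrier G)" and inj: "inj_on (\<lambda>x. x \<otimes> x) (carrier G)"
  shows "odd (order G)"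
proof
  assume "even (order G)"
  then obtain m where m: "order G = 2 ^ 1 * m"
    by auto
  have "\<exists>H. subgroup H G \<and> card H = 2 ^ 1"
    using two_is_prime_nat is_group m fin by (rule sylow_thm)
  then obtain H where H: "subgroup H G" "card H = 2"
    by (metis power_one_right)
  obtain a b where ab: "H = {a, b}" "a \<noteq> b"
    using H(2) by (meson card_2_iff)
  then obtain h where h: "h \<in> H" "h \<noteq> \<one>"
    by (cases "a = \<one>") auto
  have h_carrier: "h \<in> carrier G"
    using H(1) h(1) by (rule subgroup.mem_carrier)
  have "\<one> \<in> H"
    using H(1) by (rule subgroup.one_closed)
  with ab h have "H = {\<one>, h}"
    by fast
  moreover have "h \<otimes> h \<in> H"
    using H(1) h(1) h(1) by (rule subgroup.m_closed)
  moreover have "h \<otimes> h \<noteq> h"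
    using h h_carrier by simp
  ultimately have "h \<otimes> h = \<one> \<otimes> \<one>"
    by simp
  then have "h = \<one>"
    using inj_onD[OF inj, of h \<one>] h_carrier by simp
  with h show False
    by simp
qed

lemma (in group) square_eq_one_if_odd_order:
  assumes x: "x \<in> carrier G" and odd: "odd (order G)" and sq: "x \<otimes> x = \<one>"
  shows "x = \<one>"
proof -
  have "ord x dvd 2"
    using pow_eq_id[OF x, of 2] sq x by (simp add: numeral_2_eq_2)
  then have "0 < ord x" "ord x \<le> 2"
    using dvd_0_left_iff[of 2] by (auto intro: dvd_imp_le gr0I)
  moreover have "ord x \<noteq> 2"
    using ord_dvd_group_order[OF x] odd by auto
  ultimately have "ord x = 1"
    by simp
  then show ?thesis
    using ord_eq_1[OF x] by simp
qed

context comm_group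
begin

lemma inj_on_square_if_odd_order:
  assumes odd: "odd (order G)" shows "inj_on (\<lambda>x. x \<otimes> x) (carrier G)"
proof
  fix x y assume x: "x \<in> carrier G" and y: "y \<in> carrier G" and eq: "x \<otimes> x = y \<otimes> y"
  have "(x \<otimes> inv y) \<otimes> (x \<otimes> inv y) = (x \<otimes> x) \<otimes> inv (y \<otimes> y)"
    using x y by (simp add: inv_mult m_ac)
  also have "\<dots> = \<one>"
    using eq y by simp
  finally have "x \<otimes> inv y = \<one>"
    by (rule square_eq_one_if_odd_order[OF _ odd, rotated]) (use x y in simp)
  then show "x = y"
    using x y by (simp add: inv_solve_right')
qed

lemma square_surj_if_odd_order:
  assumes odd: "odd (order G)" shows "(\<lambda>x. x \<otimes> x) ` carrier G = carrier G"
proof (rule card_subset_eq)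
  show "finite (carrier G)"
    using odd unfolding order_def by (metis card.infinite even_zero)
  show "card ((\<lambda>x. x \<otimes> x) ` carrier G) = card (carrier G)"
    using inj_on_square_if_odd_order[OF odd] by (rule card_image)
qed auto

end

section \<open>Skew braces and the map \<lambda>\<close>

lemma skew_braceI_lambda:
  assumes "group P" "group C" and carrier_eq: "carrier P = carrier C"
    and lambda_add: "\<And>a b c. \<lbrakk>a \<in> carrier P; b \<in> carrier P; c \<in> carrier P\<rbrakk> \<Longrightarrow>
      brace_lambda P C a (b \<otimes>\<^bsub>P\<^esub> c) = brace_lambda P C a b \<otimes>\<^bsub>P\<^esub> brace_lambda P C a c"
  shows "skew_brace P C"
  unfolding skew_brace_def
proof (intro conjI ballI assms(1-3))
  interpret P: group P by fact
  interpret C: group C by fact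
  have comp_eq: "a \<otimes>\<^bsub>C\<^esub> b = a \<otimes>\<^bsub>P\<^esub> brace_lambda P C a b"
    if "a \<in> carrier P" "b \<in> carrier P" for a b
  proof -
    have "a \<otimes>\<^bsub>C\<^esub> b \<in> carrier P"
      using that carrier_eq by (metis C.m_closed)
    then show ?thesis
      using that by (simp add: brace_lambda_def)
  qed
  have lam_closed: "brace_lambda P C a b \<in> carrier P" if "a \<in> carrier P" "b \<in> carrier P" for a b
    using that carrier_eq unfolding brace_lambda_def by (metis C.m_closed P.inv_closed P.m_closed)
  fix a b c assume "a \<in> carrier C" "b \<in> carrier C" "c \<in> carrier C"
  then have abc: "a \<in> carrier P" "b \<in> carrier P" "c \<in> carrier P"
    using carrier_eq by auto
  then show "a \<otimes>\<^bsub>C\<^esub> (b \<otimes>\<^bsub>P\<^esub> c)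
      = (a \<otimes>\<^bsub>C\<^esub> b) \<otimes>\<^bsub>P\<^esub> inv\<^bsub>P\<^esub> a \<otimes>\<^bsub>P\<^esub> (a \<otimes>\<^bsub>C\<^esub> c)"
    by (simp add: comp_eq[of a] lambda_add lam_closed P.m_assoc)
qed

locale skew_brace_groups =
  fixes P :: "('a, 'm) monoid_scheme" and C :: "('a, 'n) monoid_scheme"
  assumes skew_brace: "skew_brace P C"
begin

sublocale P: group P using skew_brace unfolding skew_brace_def by blast
sublocale C: group C using skew_brace unfolding skew_brace_def by blast

abbreviation A where "A \<equiv> carrier P"
abbreviation brace_add (infixl "+\<^sub>A" 65) where "a +\<^sub>A b \<equiv> a \<otimes>\<^bsub>P\<^esub> b"
abbreviation brace_comp (infixl "\<bullet>" 70) where "a \<bullet> b \<equiv> a \<otimes>\<^bsub>C\<^esub> b"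
abbreviation neg where "neg a \<equiv> inv\<^bsub>P\<^esub> a"
abbreviation cinv where "cinv a \<equiv> inv\<^bsub>C\<^esub> a"
abbreviation e where "e \<equiv> \<one>\<^bsub>P\<^esub>"
abbreviation lam where "lam \<equiv> brace_lambda P C"
abbreviation Fix where "Fix \<equiv> brace_Fix P C"
abbreviation Ker where "Ker \<equiv> brace_ker P C"
abbreviation P_Fix where "P_Fix \<equiv> P\<lparr>carrier := Fix\<rparr>"
abbreviation C_Fix where "C_Fix \<equiv> C\<lparr>carrier := Fix\<rparr>"

lemma carrier_C [simp]: "carrier C = A"
  using skew_brace unfolding skew_brace_def by blast

lemma brace_law: "\<lbrakk>a \<in> A; b \<in> A; c \<in> A\<rbrakk> \<Longrightarrow> a \<bullet> (b +\<^sub>A c) = a \<bullet> b +\<^sub>A neg a +\<^sub>A a \<bullet> c"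
  using skew_brace unfolding skew_brace_def carrier_C by blast

lemma comp_closed [simp]: "\<lbrakk>a \<in> A; b \<in> A\<rbrakk> \<Longrightarrow> a \<bullet> b \<in> A"
  using C.m_closed by simp

lemma cinv_closed [simp]: "a \<in> A \<Longrightarrow> cinv a \<in> A"
  using C.inv_closed by simp

lemma comp_one_right [simp]:
  assumes a: "a \<in> A" shows "a \<bullet> e = a"
proof -
  have "a \<bullet> e = a \<bullet> e +\<^sub>A neg a +\<^sub>A a \<bullet> e"
    using brace_law[of a e e] a by simp
  then have "neg a +\<^sub>A a \<bullet> e = e"
    using a by (simp add: P.m_assoc P.r_cancel_one')
  then show ?thesis
    using a by (simp add: P.inv_solve_left')
qed

lemma one_C [simp]: "\<one>\<^bsub>C\<^esub> = e"
  using comp_one_right[of "\<one>\<^bsub>C\<^esub>"] C.l_one[of e] C.one_closed by simp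

lemma lam_closed [simp]: "\<lbrakk>a \<in> A; b \<in> A\<rbrakk> \<Longrightarrow> lam a b \<in> A"
  by (simp add: brace_lambda_def)

lemma comp_eq_add_lam: "\<lbrakk>a \<in> A; b \<in> A\<rbrakk> \<Longrightarrow> a \<bullet> b = a +\<^sub>A lam a b"
  by (simp add: brace_lambda_def P.m_assoc[symmetric])

lemma lam_add: "\<lbrakk>a \<in> A; b \<in> A; c \<in> A\<rbrakk> \<Longrightarrow> lam a (b +\<^sub>A c) = lam a b +\<^sub>A lam a c"
  by (simp add: brace_lambda_def brace_law P.m_assoc)

lemma lam_one_right [simp]: "a \<in> A \<Longrightarrow> lam a e = e"
  by (simp add: brace_lambda_def)

lemma lam_one_left [simp]: "b \<in> A \<Longrightarrow> lam e b = b"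
  by (simp add: brace_lambda_def)

lemma lam_neg: "\<lbrakk>a \<in> A; b \<in> A\<rbrakk> \<Longrightarrow> lam a (neg b) = neg (lam a b)"
  using lam_add[of a "neg b" b] by (simp add: P.inv_equality)

lemma lam_comp: assumes "a \<in> A" "b \<in> A" "c \<in> A"
  shows "lam (a \<bullet> b) c = lam a (lam b c)"
proof -
  have "a \<bullet> b +\<^sub>A lam (a \<bullet> b) c = a \<bullet> (b \<bullet> c)"
    using assms by (simp add: comp_eq_add_lam[symmetric] C.m_assoc)
  also have "\<dots> = a \<bullet> b +\<^sub>A (neg a +\<^sub>A a \<bullet> lam b c)"
    using assms by (simp add: comp_eq_add_lam[of b c] brace_law P.m_assoc)
  finally show ?thesis
    using assms by (simp add: brace_lambda_def)
qed

lemma lam_cinv_lam [simp]: "\<lbrakk>a \<in> A; b \<in> A\<rbrakk> \<Longrightarrow> lam (cinv a) (lam a b) = b"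
  using lam_comp[of "cinv a" a b] C.l_inv[of a] by simp

lemma lam_lam_cinv [simp]: "\<lbrakk>a \<in> A; b \<in> A\<rbrakk> \<Longrightarrow> lam a (lam (cinv a) b) = b"
  using lam_comp[of a "cinv a" b] C.r_inv[of a] by simp

lemma Fix_iff: "f \<in> Fix \<longleftrightarrow> f \<in> A \<and> (\<forall>a\<in>A. lam a f = f)"
  by (simp add: brace_Fix_def)

lemma Ker_iff: "k \<in> Ker \<longleftrightarrow> k \<in> A \<and> (\<forall>b\<in>A. lam k b = b)"
  by (simp add: brace_ker_def)

lemma Fix_subset: "Fix \<subseteq> A"
  by (auto simp: Fix_iff)

lemma Ker_subset: "Ker \<subseteq> A"
  by (auto simp: Ker_iff)

lemma Fix_carrier: "f \<in> Fix \<Longrightarrow> f \<in> A"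
  by (simp add: Fix_iff)

lemma comp_Fix: "\<lbrakk>a \<in> A; f \<in> Fix\<rbrakk> \<Longrightarrow> a \<bullet> f = a +\<^sub>A f"
  by (simp add: comp_eq_add_lam Fix_iff)

lemma Ker_comp: "\<lbrakk>k \<in> Ker; b \<in> A\<rbrakk> \<Longrightarrow> k \<bullet> b = k +\<^sub>A b"
  by (simp add: comp_eq_add_lam Ker_iff)

lemma lam_in_Fix_iff:
  assumes "a \<in> A" "b \<in> A" shows "lam a b \<in> Fix \<longleftrightarrow> b \<in> Fix"
proof
  assume "lam a b \<in> Fix"
  then have "lam (cinv a) (lam a b) = lam a b"
    using assms by (simp add: Fix_iff)
  with \<open>lam a b \<in> Fix\<close> show "b \<in> Fix"
    using assms by simp
qed (use assms in \<open>simp add: Fix_iff\<close>)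

lemma one_Fix: "e \<in> Fix"
  by (simp add: Fix_iff)

lemma add_Fix: "\<lbrakk>f \<in> Fix; g \<in> Fix\<rbrakk> \<Longrightarrow> f +\<^sub>A g \<in> Fix"
  by (simp add: Fix_iff lam_add)

lemma neg_Fix: "f \<in> Fix \<Longrightarrow> neg f \<in> Fix"
  by (simp add: Fix_iff lam_neg)

lemma subgroup_Fix_P: "subgroup Fix P"
  using Fix_subset add_Fix one_Fix neg_Fix by (rule subgroup.intro)

lemma cinv_Fix: "f \<in> Fix \<Longrightarrow> cinv f = neg f"
  using Fix_subset comp_Fix[of "neg f" f] by (intro C.inv_equality) auto

lemma subgroup_Fix_C: "subgroup Fix C"
proof (rule subgroup.intro)
  show "Fix \<subseteq> carrier C"
    using Fix_subset by simp
qed (use Fix_subset in \<open>auto simp: comp_Fix add_Fix cinv_Fix neg_Fix one_Fix\<close>)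

lemma group_P_Fix: "group P_Fix"
  using subgroup_Fix_P P.is_group by (rule subgroup.subgroup_is_group)

lemma inv_P_Fix [simp]: "f \<in> Fix \<Longrightarrow> inv\<^bsub>P_Fix\<^esub> f = neg f"
  using P.m_inv_consistent[OF subgroup_Fix_P] by simp

lemma trivial_skew_brace_Fix: "trivial_skew_brace P_Fix C_Fix"
  unfolding trivial_skew_brace_def skew_brace_def
proof (intro conjI ballI group_P_Fix)
  show "group C_Fix"
    using subgroup_Fix_C C.is_group by (rule subgroup.subgroup_is_group)
  fix a b c assume "a \<in> carrier C_Fix" "b \<in> carrier C_Fix" "c \<in> carrier C_Fix"
  then show "a \<otimes>\<^bsub>C_Fix\<^esub> (b \<otimes>\<^bsub>P_Fix\<^esub> c)
      = a \<otimes>\<^bsub>C_Fix\<^esub> b \<otimes>\<^bsub>P_Fix\<^esub> inv\<^bsub>P_Fix\<^esub> a \<otimes>\<^bsub>P_Fix\<^esub> (a \<otimes>\<^bsub>C_Fix\<^esub> c)"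
    by (simp add: Fix_carrier comp_Fix add_Fix P.m_assoc)
next
  fix a b assume "a \<in> carrier P_Fix" "b \<in> carrier P_Fix"
  then show "a \<otimes>\<^bsub>P_Fix\<^esub> b = a \<otimes>\<^bsub>C_Fix\<^esub> b"
    by (simp add: Fix_carrier comp_Fix)
qed simp

lemma Ker_comp_closed: "\<lbrakk>k \<in> Ker; l \<in> Ker\<rbrakk> \<Longrightarrow> k \<bullet> l \<in> Ker"
  by (simp add: Ker_iff lam_comp)

lemma Ker_conj: "\<lbrakk>a \<in> A; k \<in> Ker\<rbrakk> \<Longrightarrow> a \<bullet> k \<bullet> cinv a \<in> Ker"
  by (simp add: Ker_iff lam_comp)

definition lambda_action :: "'a \<Rightarrow> 'a \<Rightarrow> 'a" where
  "lambda_action a = (\<lambda>b\<in>A. lam a b)"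

lemma lambda_action_Bij: "a \<in> A \<Longrightarrow> lambda_action a \<in> Bij A"
  unfolding lambda_action_def Bij_def
  by (auto intro!: bij_betw_byWitness[where f'="lam (cinv a)"])

lemma group_action_lambda: "group_action C A lambda_action"
  unfolding group_action_def group_hom_def group_hom_axioms_def
proof (intro conjI C.is_group group_BijGroup homI)
  fix a assume "a \<in> carrier C"
  then show "lambda_action a \<in> carrier (BijGroup A)"
    by (simp add: BijGroup_def lambda_action_Bij)
next
  fix a b assume "a \<in> carrier C" "b \<in> carrier C"
  then show "lambda_action (a \<bullet> b) = lambda_action a \<otimes>\<^bsub>BijGroup A\<^esub> lambda_action b"
    using lambda_action_Bij[of a] lambda_action_Bij[of b] unfolding BijGroup_def
    by (auto simp: lambda_action_def compose_def lam_comp)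
qed

lemma orbit_lambda: "b \<in> A \<Longrightarrow> orbit C lambda_action b = (\<lambda>a. lam a b) ` A"
  by (auto simp: orbit_def lambda_action_def)

lemma stabilizer_lambda: "b \<in> A \<Longrightarrow> stabilizer C lambda_action b = {a \<in> A. lam a b = b}"
  by (auto simp: stabilizer_def lambda_action_def)

lemma Lambda_vertices_eq:
  "Lambda_vertices P C = {L \<in> orbit C lambda_action ` A. 1 < card L}"
  by (simp add: Lambda_vertices_def lambda_orbits_def orbit_lambda cong: image_cong)

end

section \<open>The model on F \<times> Z/2\<close>

lemma sgn_act_False [simp]: "sgn_act G False f = f"
  and sgn_act_True [simp]: "sgn_act G True f = inv\<^bsub>G\<^esub> f"
  by (simp_all add: sgn_act_def)

context comm_group
begin

lemma sgn_act_closed [simp]: "f \<in> carrier G \<Longrightarrow> sgn_act G k f \<in> carrier G"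
  by (simp add: sgn_act_def)

lemma sgn_act_mult:
  "\<lbrakk>f \<in> carrier G; g \<in> carrier G\<rbrakk> \<Longrightarrow> sgn_act G k (f \<otimes> g) = sgn_act G k f \<otimes> sgn_act G k g"
  by (simp add: sgn_act_def inv_mult)

lemma model_add_mult [simp]:
  "(f1, k1) \<otimes>\<^bsub>model_add G\<^esub> (f2, k2) = (f1 \<otimes> sgn_act G k1 f2, k1 \<noteq> k2)"
  by (simp add: model_add_def)

lemma model_comp_mult [simp]:
  "(f1, k1) \<otimes>\<^bsub>model_comp G\<^esub> (f2, k2) = (sgn_act G k2 f1 \<otimes> sgn_act G k1 f2, k1 \<noteq> k2)"
  by (simp add: model_comp_def)

lemma carrier_model_add [simp]: "carrier (model_add G) = carrier G \<times> UNIV"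
  by (simp add: model_add_def)

lemma carrier_model_comp [simp]: "carrier (model_comp G) = carrier G \<times> UNIV"
  by (simp add: model_comp_def)

lemma one_model_add [simp]: "\<one>\<^bsub>model_add G\<^esub> = (\<one>, False)"
  by (simp add: model_add_def)

lemma one_model_comp [simp]: "\<one>\<^bsub>model_comp G\<^esub> = (\<one>, False)"
  by (simp add: model_comp_def)

lemma sgn_act_one [simp]: "sgn_act G k \<one> = \<one>"
  by (simp add: sgn_act_def)

lemma group_model_add: "group (model_add G)"
proof (rule groupI)
  fix x y z assume "x \<in> carrier (model_add G)" "y \<in> carrier (model_add G)"
    "z \<in> carrier (model_add G)"
  then obtain f1 k1 f2 k2 f3 k3 where "x = (f1, k1)" "y = (f2, k2)" "z = (f3, k3)"
    "f1 \<in> carrier G" "f2 \<in> carrier G" "f3 \<in> carrier G"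
    by auto
  then show "x \<otimes>\<^bsub>model_add G\<^esub> y \<otimes>\<^bsub>model_add G\<^esub> z
      = x \<otimes>\<^bsub>model_add G\<^esub> (y \<otimes>\<^bsub>model_add G\<^esub> z)"
    by (cases k1; cases k2) (simp_all add: inv_mult m_assoc)
next
  fix x assume "x \<in> carrier (model_add G)"
  then obtain f k where x: "x = (f, k)" "f \<in> carrier G"
    by auto
  then have "(sgn_act G k (inv f), k) \<otimes>\<^bsub>model_add G\<^esub> x = \<one>\<^bsub>model_add G\<^esub>"
    by (simp add: sgn_act_mult[symmetric])
  with x show "\<exists>y\<in>carrier (model_add G). y \<otimes>\<^bsub>model_add G\<^esub> x = \<one>\<^bsub>model_add G\<^esub>"
    by force
qed auto

lemma group_model_comp: "group (model_comp G)"
proof (rule groupI)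
  fix x y z assume "x \<in> carrier (model_comp G)" "y \<in> carrier (model_comp G)"
    "z \<in> carrier (model_comp G)"
  then obtain f1 k1 f2 k2 f3 k3 where "x = (f1, k1)" "y = (f2, k2)" "z = (f3, k3)"
    "f1 \<in> carrier G" "f2 \<in> carrier G" "f3 \<in> carrier G"
    by auto
  then show "x \<otimes>\<^bsub>model_comp G\<^esub> y \<otimes>\<^bsub>model_comp G\<^esub> z
      = x \<otimes>\<^bsub>model_comp G\<^esub> (y \<otimes>\<^bsub>model_comp G\<^esub> z)"
    by (cases k1; cases k2; cases k3) (simp_all add: inv_mult m_assoc)
next
  fix x assume "x \<in> carrier (model_comp G)"
  then obtain f k where x: "x = (f, k)" "f \<in> carrier G"
    by auto
  then have "(inv f, k) \<otimes>\<^bsub>model_comp G\<^esub> x = \<one>\<^bsub>model_comp G\<^esub>"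
    by (simp add: sgn_act_mult[symmetric])
  with x show "\<exists>y\<in>carrier (model_comp G). y \<otimes>\<^bsub>model_comp G\<^esub> x = \<one>\<^bsub>model_comp G\<^esub>"
    by force
qed auto

lemma inv_model_add:
  "f \<in> carrier G \<Longrightarrow> inv\<^bsub>model_add G\<^esub> (f, k) = (sgn_act G k (inv f), k)"
  by (rule group.inv_equality[OF group_model_add]) (simp_all add: sgn_act_mult[symmetric])

abbreviation model_lambda where
  "model_lambda \<equiv> brace_lambda (model_add G) (model_comp G)"

lemma brace_lambda_model:
  assumes "f \<in> carrier G" "g \<in> carrier G"
  shows "model_lambda (f, k) (g, l)
    = (if l then sgn_act G k (inv f) \<otimes> (sgn_act G k (inv f) \<otimes> g) else g, l)"
  using assms by (cases k; cases l) (simp_all add: brace_lambda_def inv_model_add inv_mult m_assoc)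

lemma skew_brace_model: "skew_brace (model_add G) (model_comp G)"
proof (rule skew_braceI_lambda[OF group_model_add group_model_comp])
  fix a b c assume "a \<in> carrier (model_add G)" "b \<in> carrier (model_add G)" "c \<in> carrier (model_add G)"
  then obtain f k g1 l1 g2 l2 where abc: "a = (f, k)" "b = (g1, l1)" "c = (g2, l2)"
    and carr: "f \<in> carrier G" "g1 \<in> carrier G" "g2 \<in> carrier G"
    by auto
  define t where "t = sgn_act G k (inv f)"
  have t: "t \<in> carrier G"
    using carr by (simp add: t_def)
  show "model_lambda a (b \<otimes>\<^bsub>model_add G\<^esub> c)
      = model_lambda a b \<otimes>\<^bsub>model_add G\<^esub> model_lambda a c"
    using carr t unfolding abc
    by (cases l1; cases l2) (simp_all add: brace_lambda_model t_def[symmetric] inv_mult m_ac)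
qed simp

lemma brace_Fix_model:
  assumes odd: "odd (order G)" and nontrivial: "1 < card (carrier G)"
  shows "brace_Fix (model_add G) (model_comp G) = carrier G \<times> {False}"
proof
  show "carrier G \<times> {False} \<subseteq> brace_Fix (model_add G) (model_comp G)"
    by (auto simp: brace_Fix_def brace_lambda_model)
  have "\<not> carrier G \<subseteq> {\<one>}"
    using nontrivial card_mono[of "{\<one>}" "carrier G"] by auto
  then obtain f where f: "f \<in> carrier G" "f \<noteq> \<one>"
    by blast
  show "brace_Fix (model_add G) (model_comp G) \<subseteq> carrier G \<times> {False}"
  proof
    fix p assume p: "p \<in> brace_Fix (model_add G) (model_comp G)"
    then obtain g l where gl: "p = (g, l)" "g \<in> carrier G"
      by (auto simp: brace_Fix_def)
    have "model_lambda (f, True) (g, l) = (g, l)"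
      using p f gl by (auto simp: brace_Fix_def)
    then have "l \<Longrightarrow> f \<otimes> f = \<one>"
      using f gl by (simp add: brace_lambda_model m_assoc[symmetric])
    then show "p \<in> carrier G \<times> {False}"
      using gl f square_eq_one_if_odd_order[OF f(1) odd] by auto
  qed
qed

lemma brace_ker_model:
  assumes odd: "odd (order G)"
  shows "brace_ker (model_add G) (model_comp G) = {\<one>} \<times> UNIV"
proof
  show "{\<one>} \<times> UNIV \<subseteq> brace_ker (model_add G) (model_comp G)"
    by (auto simp: brace_ker_def brace_lambda_model)
  show "brace_ker (model_add G) (model_comp G) \<subseteq> {\<one>} \<times> UNIV"
  proof
    fix p assume p: "p \<in> brace_ker (model_add G) (model_comp G)"
    then obtain f k where fk: "p = (f, k)" "f \<in> carrier G"
      by (auto simp: brace_ker_def)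
    define t where "t = sgn_act G k (inv f)"
    have t: "t \<in> carrier G"
      using fk by (simp add: t_def)
    have "model_lambda (f, k) (\<one>, True) = (\<one>, True)"
      using p fk by (auto simp: brace_ker_def)
    then have "t \<otimes> t = \<one>"
      using fk by (simp add: brace_lambda_model t_def)
    then have "t = \<one>"
      by (rule square_eq_one_if_odd_order[OF t odd])
    then have "f = \<one>"
      using fk by (cases k) (simp_all add: t_def)
    then show "p \<in> {\<one>} \<times> UNIV"
      using fk by simp
  qed
qed

lemma lambda_orbit_model_False:
  assumes g: "g \<in> carrier G"
  shows "(\<lambda>a. model_lambda a (g, False)) ` carrier (model_comp G) = {(g, False)}"
proof -
  have "(\<lambda>a. model_lambda a (g, False)) ` carrier (model_comp G)
      = (\<lambda>a. (g, False)) ` carrier (model_comp G)"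
    using g by (intro image_cong) (auto simp: brace_lambda_model)
  also have "\<dots> = {(g, False)}"
    by (rule image_constant[of "(\<one>, False)"]) simp
  finally show ?thesis .
qed

lemma lambda_orbit_model_True:
  assumes odd: "odd (order G)" and g: "g \<in> carrier G"
  shows "(\<lambda>a. model_lambda a (g, True)) ` carrier (model_comp G) = carrier G \<times> {True}"
proof
  show "(\<lambda>a. model_lambda a (g, True)) ` carrier (model_comp G) \<subseteq> carrier G \<times> {True}"
  proof (rule image_subsetI)
    fix a assume "a \<in> carrier (model_comp G)"
    then show "model_lambda a (g, True) \<in> carrier G \<times> {True}"
      using g by (cases a) (simp add: brace_lambda_model)
  qed
  show "carrier G \<times> {True} \<subseteq> (\<lambda>a. model_lambda a (g, True)) ` carrier (model_comp G)"
  proof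
    fix q assume "q \<in> carrier G \<times> {True}"
    then obtain z where z: "q = (z, True)" "z \<in> carrier G"
      by blast
    have "z \<otimes> inv g \<in> (\<lambda>x. x \<otimes> x) ` carrier G"
      unfolding square_surj_if_odd_order[OF odd] using z g by simp
    then obtain x where x: "x \<in> carrier G" "z \<otimes> inv g = x \<otimes> x"
      by (rule imageE)
    have "x \<otimes> (x \<otimes> g) = (z \<otimes> inv g) \<otimes> g"
      using x g by (simp add: m_assoc)
    also have "\<dots> = z"
      using z g by (simp add: m_assoc)
    finally have "model_lambda (x, True) (g, True) = q"
      using x z g by (simp add: brace_lambda_model)
    with x show "q \<in> (\<lambda>a. model_lambda a (g, True)) ` carrier (model_comp G)"
      by (intro rev_image_eqI[of "(x, True)"]) simp_all
  qed
qed

lemma Lambda_vertices_model: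
  assumes odd: "odd (order G)" and nontrivial: "1 < card (carrier G)"
  shows "Lambda_vertices (model_add G) (model_comp G) = {carrier G \<times> {True}}"
proof -
  have orbit: "(\<lambda>a. model_lambda a (g, l)) ` carrier (model_comp G)
      = (if l then carrier G \<times> {True} else {(g, False)})" if "g \<in> carrier G" for g l
    using that lambda_orbit_model_False lambda_orbit_model_True[OF odd] by (cases l) simp_all
  have "lambda_orbits (model_add G) (model_comp G)
      = (\<lambda>(g, l). if l then carrier G \<times> {True} else {(g, False)}) ` (carrier G \<times> UNIV)"
    unfolding lambda_orbits_def using orbit by (intro image_cong) auto
  moreover have "card (carrier G \<times> {True}) = card (carrier G)"
    by (simp add: card_cartesian_product)
  ultimately show ?thesis
    using nontrivial by (auto simp: Lambda_vertices_def image_iff)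
qed

end

section \<open>Finite skew braces whose graph has one vertex\<close>

lemma mult_eq_add_dvd_imp:
  fixes d m s :: nat
  assumes "0 < d" "0 < m" "m * s = d + m" "d dvd d + m"
  shows "m = d \<and> s = 2"
proof -
  obtain t where t: "m = d * t"
    using assms(4) by (auto simp: dvd_add_right_iff)
  then have "d * (t * s) = d * (1 + t)"
    using assms(3) by (simp add: algebra_simps)
  then have "t * s = 1 + t"
    using assms(1) by (simp only: mult_left_cancel neq0_conv)
  then have "t * (s - 1) = 1"
    by (simp add: diff_mult_distrib2)
  then show ?thesis
    using t by simp arith
qed

locale one_vertex_skew_brace = skew_brace_groups +
  assumes finite_carrier: "finite (carrier P)"
    and one_vertex: "card (Lambda_vertices P C) = 1"
    and Ker_Int_Fix: "brace_ker P C \<inter> brace_Fix P C = {\<one>\<^bsub>P\<^esub>}"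
begin

sublocale lambda: group_action C A lambda_action
  by (rule group_action_lambda)

abbreviation orb where "orb b \<equiv> orbit C lambda_action b"

lemma finite_Fix: "finite Fix"
  using finite_carrier Fix_subset by (rule finite_subset[rotated])

lemma orbit_Fix: "f \<in> Fix \<Longrightarrow> orb f = {f}"
  using Fix_subset by (auto simp: orbit_lambda Fix_iff)

lemma orbit_nonfixed_subset: "b \<in> A - Fix \<Longrightarrow> orb b \<subseteq> A - Fix"
  by (auto simp: orbit_lambda lam_in_Fix_iff)

lemma card_orbit_nonfixed: assumes b: "b \<in> A - Fix" shows "1 < card (orb b)"
proof -
  obtain a where a: "a \<in> A" "lam a b \<noteq> b"
    using b by (auto simp: Fix_iff)
  have "{b, lam a b} \<subseteq> orb b"
    using a b by (auto simp: orbit_lambda intro!: image_eqI[where x = e])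
  moreover have "finite (orb b)"
    using b finite_carrier by (simp add: orbit_lambda)
  ultimately have "card {b, lam a b} \<le> card (orb b)"
    by (rule card_mono[rotated])
  with a show ?thesis
    by simp
qed

lemma orbit_nonfixed: assumes b: "b \<in> A - Fix" shows "orb b = A - Fix"
proof
  obtain L where L: "Lambda_vertices P C = {L}"
    using one_vertex card_1_singletonE by blast
  have "orb c = L" if "c \<in> A - Fix" for c
    using that card_orbit_nonfixed L by (auto simp: Lambda_vertices_eq)
  then show "A - Fix \<subseteq> orb b"
    using b lambda.orbit_refl by blast
qed (rule orbit_nonfixed_subset[OF b])

lemma nonfixed_nonempty: "A - Fix \<noteq> {}"
proof
  assume "A - Fix = {}"
  then have "Lambda_vertices P C = {}"
    using orbit_Fix by (auto simp: Lambda_vertices_eq)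
  with one_vertex show False
    by simp
qed

lemma card_nonfixed:
  assumes b: "b \<in> A - Fix"
  shows "card (A - Fix) = card Fix" and "card (stabilizer C lambda_action b) = 2"
proof -
  have card_A: "card A = card Fix + card (A - Fix)"
    using card_Diff_subset[OF finite_Fix Fix_subset] card_mono[OF finite_carrier Fix_subset]
    by simp
  have "card (A - Fix) * card (stabilizer C lambda_action b) = card Fix + card (A - Fix)"
    using lambda.orbit_stabilizer_theorem[of b] b orbit_nonfixed[OF b] card_A
    by (simp add: order_def)
  moreover have "card Fix dvd card Fix + card (A - Fix)"
    using P.lagrange[OF subgroup_Fix_P] card_A unfolding order_def by (metis dvd_triv_right)
  moreover have "0 < card Fix" "0 < card (A - Fix)"
    using finite_Fix one_Fix b finite_carrier by (auto simp: card_gt_0_iff)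
  ultimately show "card (A - Fix) = card Fix" "card (stabilizer C lambda_action b) = 2"
    using mult_eq_add_dvd_imp by blast+
qed

lemma nonfixed_eq_coset:
  assumes b: "b \<in> A - Fix" shows "A - Fix = (\<lambda>f. b +\<^sub>A f) ` Fix"
proof -
  have sub: "(\<lambda>f. b +\<^sub>A f) ` Fix \<subseteq> A - Fix"
  proof
    fix c assume "c \<in> (\<lambda>f. b +\<^sub>A f) ` Fix"
    then obtain f where f: "f \<in> Fix" "c = b +\<^sub>A f" by blast
    then have "c +\<^sub>A neg f = b"
      using b Fix_subset by (auto simp: P.m_assoc)
    with f b show "c \<in> A - Fix"
      using Fix_subset add_Fix neg_Fix by (metis Diff_iff P.m_closed subsetD)
  qed
  have "inj_on (\<lambda>f. b +\<^sub>A f) Fix"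
    using b Fix_subset unfolding inj_on_def by (metis DiffD1 P.l_cancel subsetD)
  then have "card ((\<lambda>f. b +\<^sub>A f) ` Fix) = card (A - Fix)"
    using card_nonfixed(1)[OF b] by (simp add: card_image)
  then show ?thesis
    using card_subset_eq[OF _ sub] finite_carrier by simp
qed

lemma stabilizer_nonfixed:
  assumes b: "b \<in> A - Fix" shows "stabilizer C lambda_action b = Ker"
proof -
  have "a \<in> Ker" if a: "a \<in> A" "lam a b = b" for a
    unfolding Ker_iff
  proof (intro conjI ballI a(1))
    fix c assume c: "c \<in> A"
    show "lam a c = c"
    proof (cases "c \<in> Fix")
      case False
      then obtain f where "f \<in> Fix" "c = b +\<^sub>A f"
        using nonfixed_eq_coset[OF b] c by blast
      then show ?thesis
        using a b Fix_subset by (auto simp: lam_add Fix_iff)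
    qed (use a in \<open>simp add: Fix_iff\<close>)
  qed
  moreover have "Ker \<subseteq> {a \<in> A. lam a b = b}"
    using b by (auto simp: Ker_iff)
  moreover have "stabilizer C lambda_action b = {a \<in> A. lam a b = b}"
    using b by (simp add: stabilizer_lambda)
  ultimately show ?thesis
    by blast
qed

lemma card_Ker: "card Ker = 2"
proof -
  obtain b where "b \<in> A - Fix"
    using nonfixed_nonempty by blast
  then show ?thesis
    using card_nonfixed(2) stabilizer_nonfixed by simp
qed

definition tau :: 'a where
  "tau = (SOME k. k \<in> Ker \<and> k \<noteq> e)"

lemma tau_in_Ker: "tau \<in> Ker" and tau_neq_e: "tau \<noteq> e"
proof -
  have "\<not> Ker \<subseteq> {e}"
    using card_Ker card_mono[of "{e}" Ker] by auto
  then have "\<exists>k. k \<in> Ker \<and> k \<noteq> e"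
    by blast
  then show "tau \<in> Ker" "tau \<noteq> e"
    unfolding tau_def by (metis (mono_tags, lifting) someI_ex)+
qed

lemma tau_carrier [simp]: "tau \<in> A"
  using tau_in_Ker Ker_subset by blast

lemma tau_notin_Fix: "tau \<notin> Fix"
  using tau_in_Ker tau_neq_e Ker_Int_Fix by blast

lemma Ker_eq: "Ker = {e, tau}"
proof -
  have "e \<in> Ker"
    by (simp add: Ker_iff)
  moreover have "finite Ker"
    using finite_carrier Ker_subset by (rule finite_subset[rotated])
  ultimately show ?thesis
    using tau_in_Ker tau_neq_e card_Ker card_subset_eq[of Ker "{e, tau}"] by auto
qed

lemma comp_tau_neq: "a \<in> A \<Longrightarrow> a \<bullet> tau \<noteq> a"
  using tau_neq_e C.l_cancel_one[of a tau] by simp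

lemma tau_add_tau [simp]: "tau +\<^sub>A tau = e"
proof -
  have "tau \<bullet> tau \<in> Ker" "tau \<bullet> tau \<noteq> tau"
    using tau_in_Ker Ker_comp_closed comp_tau_neq by auto
  then show ?thesis
    using Ker_eq Ker_comp[OF tau_in_Ker] by auto
qed

lemma tau_add_tau_add [simp]: "x \<in> A \<Longrightarrow> tau +\<^sub>A (tau +\<^sub>A x) = x"
  by (simp add: P.m_assoc[symmetric])

lemma comp_tau_commute:
  assumes a: "a \<in> A" shows "a \<bullet> tau = tau \<bullet> a"
proof -
  have "a \<bullet> tau \<bullet> cinv a \<in> Ker"
    using a tau_in_Ker by (rule Ker_conj)
  moreover have "a \<bullet> tau \<bullet> cinv a \<noteq> e"
  proof
    assume "a \<bullet> tau \<bullet> cinv a = e"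
    then have "a \<bullet> tau = a"
      using a by (simp add: C.inv_solve_right')
    with a show False
      using comp_tau_neq by blast
  qed
  ultimately have "a \<bullet> tau \<bullet> cinv a = tau"
    using Ker_eq by blast
  then show ?thesis
    using a by (simp add: C.inv_solve_right')
qed

lemma lam_Fix_tau: assumes f: "f \<in> Fix" shows "lam f tau = neg f +\<^sub>A tau +\<^sub>A f"
proof -
  have "f +\<^sub>A lam f tau = tau +\<^sub>A f"
    using f Fix_subset comp_tau_commute[of f] Ker_comp[OF tau_in_Ker]
    by (auto simp: comp_eq_add_lam)
  then show ?thesis
    using f Fix_subset by (auto simp: P.inv_solve_left P.m_assoc)
qed

definition twist :: "'a \<Rightarrow> 'a" where
  "twist f = tau +\<^sub>A lam f tau"

lemma lam_tau_eq_twist: "f \<in> A \<Longrightarrow> lam f tau = tau +\<^sub>A twist f"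
  by (simp add: twist_def P.m_assoc[symmetric])

lemma twist_Fix: assumes f: "f \<in> Fix" shows "twist f \<in> Fix"
proof -
  have "lam f tau \<in> A - Fix"
    using f Fix_subset tau_notin_Fix by (auto simp: lam_in_Fix_iff)
  then obtain g where "g \<in> Fix" "lam f tau = tau +\<^sub>A g"
    using nonfixed_eq_coset[of tau] tau_notin_Fix by auto
  then show ?thesis
    using Fix_subset by (auto simp: twist_def P.m_assoc[symmetric])
qed

lemma tau_conj_twist:
  assumes f: "f \<in> Fix" shows "tau +\<^sub>A twist f +\<^sub>A tau = neg (twist f)"
proof -
  have fA: "f \<in> A" and tA: "twist f \<in> A"
    using f twist_Fix Fix_subset by auto
  have "lam f tau +\<^sub>A lam f tau = e"
    using fA lam_add[of f tau tau] by simp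
  then have "(tau +\<^sub>A twist f +\<^sub>A tau) +\<^sub>A twist f = e"
    using fA tA by (simp add: lam_tau_eq_twist P.m_assoc)
  then show ?thesis
    using tA by (simp add: P.inv_equality)
qed

lemma inj_on_twist: "inj_on twist Fix"
proof
  fix f g assume f: "f \<in> Fix" and g: "g \<in> Fix" and eq: "twist f = twist g"
  have fA: "f \<in> A" and gA: "g \<in> A"
    using f g Fix_subset by auto
  have "lam f tau = lam g tau"
    using eq fA gA by (simp add: lam_tau_eq_twist)
  then have "lam (cinv g \<bullet> f) tau = tau"
    using fA gA by (simp add: lam_comp)
  then have "cinv g \<bullet> f \<in> stabilizer C lambda_action tau"
    using fA gA by (simp add: stabilizer_lambda)
  then have "cinv g \<bullet> f \<in> Ker"
    using stabilizer_nonfixed[of tau] tau_notin_Fix by simp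
  moreover have "cinv g \<bullet> f \<in> Fix"
    using f g neg_Fix[OF g] Fix_subset comp_Fix[of "neg g" f] by (auto simp: cinv_Fix add_Fix)
  ultimately have "cinv g \<bullet> f = e"
    using Ker_Int_Fix by blast
  then show "f = g"
    using fA gA C.inv_solve_left'[of e g f] by simp
qed

lemma twist_image: "twist ` Fix = Fix"
proof (rule card_subset_eq[OF finite_Fix])
  show "twist ` Fix \<subseteq> Fix"
    using twist_Fix by blast
  show "card (twist ` Fix) = card Fix"
    using inj_on_twist by (rule card_image)
qed

lemma tau_conj_Fix: "g \<in> Fix \<Longrightarrow> tau +\<^sub>A g +\<^sub>A tau = neg g"
  by (metis imageE tau_conj_twist twist_image)

lemma tau_add_Fix: assumes g: "g \<in> Fix" shows "tau +\<^sub>A g = neg g +\<^sub>A tau"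
proof -
  have "tau +\<^sub>A g = tau +\<^sub>A g +\<^sub>A tau +\<^sub>A tau"
    using g Fix_subset by (auto simp: P.m_assoc)
  then show ?thesis
    using tau_conj_Fix[OF g] by simp
qed

lemma neg_add_Fix:
  assumes f: "f \<in> Fix" and g: "g \<in> Fix" shows "neg (f +\<^sub>A g) = neg f +\<^sub>A neg g"
proof -
  have "neg (f +\<^sub>A g) = tau +\<^sub>A (f +\<^sub>A g) +\<^sub>A tau"
    using f g by (simp add: add_Fix tau_conj_Fix)
  also have "\<dots> = (tau +\<^sub>A f +\<^sub>A tau) +\<^sub>A (tau +\<^sub>A g +\<^sub>A tau)"
    using f g Fix_subset by (simp add: subsetD P.m_assoc)
  finally show ?thesis
    using f g tau_conj_Fix by simp
qed

lemma add_Fix_commute: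
  assumes f: "f \<in> Fix" and g: "g \<in> Fix" shows "f +\<^sub>A g = g +\<^sub>A f"
proof -
  have "neg (f +\<^sub>A g) = neg g +\<^sub>A neg f"
    using f g by (simp add: P.inv_mult_group Fix_carrier)
  also have "\<dots> = neg (g +\<^sub>A f)"
    using f g by (simp add: neg_add_Fix)
  finally have "neg (neg (f +\<^sub>A g)) = neg (neg (g +\<^sub>A f))"
    by simp
  then show ?thesis
    using f g by (simp add: Fix_carrier)
qed

lemma twist_eq_double: assumes f: "f \<in> Fix" shows "twist f = f +\<^sub>A f"
proof -
  have "twist f = (tau +\<^sub>A neg f +\<^sub>A tau) +\<^sub>A f"
    using f Fix_subset by (auto simp: twist_def lam_Fix_tau P.m_assoc)
  then show ?thesis
    using f tau_conj_Fix[of "neg f"] neg_Fix Fix_subset by auto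
qed

lemma comm_group_Fix: "comm_group P_Fix"
  using group_P_Fix by (rule group.group_comm_groupI) (simp add: add_Fix_commute)

lemma odd_card_Fix: "odd (card Fix)"
proof -
  have "inj_on (\<lambda>f. f +\<^sub>A f) Fix"
    using inj_on_twist twist_eq_double by (auto simp: inj_on_def)
  then have "odd (order P_Fix)"
    using group.odd_order_if_inj_square[OF group_P_Fix] finite_Fix by simp
  then show ?thesis
    by (simp add: order_def)
qed

sublocale Fix: comm_group P_Fix
  by (rule comm_group_Fix)

lemma comp_Fix_nonfixed:
  assumes f: "f \<in> Fix" and g: "g \<in> Fix"
  shows "f \<bullet> (g +\<^sub>A tau) = neg f +\<^sub>A g +\<^sub>A tau"
proof -
  have fA: "f \<in> A" and gA: "g \<in> A"
    using f g by (auto simp: Fix_carrier)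
  have "f \<bullet> (g +\<^sub>A tau) = f +\<^sub>A (g +\<^sub>A (neg f +\<^sub>A tau +\<^sub>A f))"
    using f fA gA by (simp add: comp_eq_add_lam lam_add lam_Fix_tau g[unfolded Fix_iff])
  also have "\<dots> = f +\<^sub>A g +\<^sub>A neg f +\<^sub>A neg f +\<^sub>A tau"
    using f fA gA tau_add_Fix[OF f] by (simp add: P.m_assoc)
  also have "\<dots> = neg f +\<^sub>A g +\<^sub>A tau"
    using f g fA gA add_Fix_commute[of f g] add_Fix_commute[of g "neg f"] neg_Fix[OF f]
    by (simp add: P.m_assoc)
  finally show ?thesis .
qed

definition model_to_brace :: "'a \<times> bool \<Rightarrow> 'a" where
  "model_to_brace p = (if snd p then fst p +\<^sub>A tau else fst p)"

lemma model_to_brace_add: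
  assumes f: "f \<in> Fix" and g: "g \<in> Fix"
  shows "model_to_brace ((f, k) \<otimes>\<^bsub>model_add P_Fix\<^esub> (g, l))
    = model_to_brace (f, k) +\<^sub>A model_to_brace (g, l)"
proof -
  have fA: "f \<in> A" and gA: "g \<in> A"
    using f g by (auto simp: Fix_carrier)
  show ?thesis
  proof (cases k; cases l)
    assume "k" "l"
    then show ?thesis
      using f g fA gA tau_conj_Fix[OF g]
      by (simp add: model_to_brace_def P.m_assoc)
  next
    assume "k" "\<not> l"
    then show ?thesis
      using f g fA gA tau_add_Fix[OF g]
      by (simp add: model_to_brace_def P.m_assoc)
  qed (simp_all add: model_to_brace_def fA gA P.m_assoc)
qed

lemma model_to_brace_comp:
  assumes f: "f \<in> Fix" and g: "g \<in> Fix"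
  shows "model_to_brace ((f, k) \<otimes>\<^bsub>model_comp P_Fix\<^esub> (g, l))
    = model_to_brace (f, k) \<bullet> model_to_brace (g, l)"
proof -
  have fA: "f \<in> A" and gA: "g \<in> A"
    using f g by (auto simp: Fix_carrier)
  show ?thesis
  proof (cases k; cases l)
    assume "k" "l"
    have "f +\<^sub>A tau = tau \<bullet> neg f"
      using fA tau_add_Fix[OF neg_Fix[OF f]] Ker_comp[OF tau_in_Ker] by simp
    then have "(f +\<^sub>A tau) \<bullet> (g +\<^sub>A tau) = tau \<bullet> (neg f \<bullet> (g +\<^sub>A tau))"
      using fA gA by (simp add: C.m_assoc)
    also have "\<dots> = tau +\<^sub>A (f +\<^sub>A g) +\<^sub>A tau"
      using f g fA gA comp_Fix_nonfixed[OF neg_Fix[OF f] g] Ker_comp[OF tau_in_Ker]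
      by (simp add: P.m_assoc)
    also have "\<dots> = neg f +\<^sub>A neg g"
      using f g by (simp add: tau_conj_Fix add_Fix neg_add_Fix)
    finally show ?thesis
      using \<open>k\<close> \<open>l\<close> f g by (simp add: model_to_brace_def)
  next
    assume "k" "\<not> l"
    then show ?thesis
      using f g fA gA tau_add_Fix[OF g]
      by (simp add: model_to_brace_def comp_Fix P.m_assoc)
  next
    assume "\<not> k" "l"
    then show ?thesis
      using f g by (simp add: model_to_brace_def comp_Fix_nonfixed)
  next
    assume "\<not> k" "\<not> l"
    then show ?thesis
      using fA g by (simp add: model_to_brace_def comp_Fix)
  qed
qed

lemma bij_betw_model_to_brace: "bij_betw model_to_brace (Fix \<times> UNIV) A"
proof (rule bij_betw_imageI)
  show "inj_on model_to_brace (Fix \<times> UNIV)"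
  proof (rule inj_onI, clarsimp)
    fix f k g l assume f: "f \<in> Fix" and g: "g \<in> Fix"
      and eq: "model_to_brace (f, k) = model_to_brace (g, l)"
    have "k = l"
    proof (rule ccontr)
      assume "k \<noteq> l"
      then have "tau = neg f +\<^sub>A g \<or> tau = neg g +\<^sub>A f"
        using eq f g by (cases k) (auto simp: model_to_brace_def P.inv_solve_left Fix_carrier)
      then show False
        using f g tau_notin_Fix by (auto simp: add_Fix neg_Fix)
    qed
    with eq f g show "f = g \<and> k = l"
      by (cases k) (auto simp: model_to_brace_def Fix_carrier)
  qed
  show "model_to_brace ` (Fix \<times> UNIV) = A"
  proof
    show "model_to_brace ` (Fix \<times> UNIV) \<subseteq> A"
      by (auto simp: model_to_brace_def Fix_carrier)
    show "A \<subseteq> model_to_brace ` (Fix \<times> UNIV)"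
    proof
      fix a assume a: "a \<in> A"
      show "a \<in> model_to_brace ` (Fix \<times> UNIV)"
      proof (cases "a \<in> Fix")
        case True
        then show ?thesis
          by (intro rev_image_eqI[of "(a, False)"]) (simp_all add: model_to_brace_def)
      next
        case False
        then obtain g where g: "g \<in> Fix" "a = tau +\<^sub>A g"
          using nonfixed_eq_coset[of tau] tau_notin_Fix a by auto
        then show ?thesis
          by (intro rev_image_eqI[of "(neg g, True)"]) (simp_all add: model_to_brace_def tau_add_Fix neg_Fix)
      qed
    qed
  qed
qed

lemma model_to_brace_iso_add: "model_to_brace \<in> iso (model_add P_Fix) P"
proof (rule isoI)
  show "model_to_brace \<in> hom (model_add P_Fix) P"
  proof (rule homI)
    fix p assume "p \<in> carrier (model_add P_Fix)"
    then show "model_to_brace p \<in> carrier P"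
      using bij_betw_model_to_brace by (auto simp: bij_betw_def)
  next
    fix p q assume "p \<in> carrier (model_add P_Fix)" "q \<in> carrier (model_add P_Fix)"
    then obtain f k g l where pq: "p = (f, k)" "q = (g, l)" and fg: "f \<in> Fix" "g \<in> Fix"
      by auto
    show "model_to_brace (p \<otimes>\<^bsub>model_add P_Fix\<^esub> q) = model_to_brace p \<otimes>\<^bsub>P\<^esub> model_to_brace q"
      unfolding pq using fg by (rule model_to_brace_add)
  qed
  show "bij_betw model_to_brace (carrier (model_add P_Fix)) (carrier P)"
    using bij_betw_model_to_brace by simp
qed

lemma model_to_brace_iso_comp: "model_to_brace \<in> iso (model_comp P_Fix) C"
proof (rule isoI)
  show "model_to_brace \<in> hom (model_comp P_Fix) C"
  proof (rule homI)
    fix p assume "p \<in> carrier (model_comp P_Fix)"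
    then show "model_to_brace p \<in> carrier C"
      using bij_betw_model_to_brace by (auto simp: bij_betw_def)
  next
    fix p q assume "p \<in> carrier (model_comp P_Fix)" "q \<in> carrier (model_comp P_Fix)"
    then obtain f k g l where pq: "p = (f, k)" "q = (g, l)" and fg: "f \<in> Fix" "g \<in> Fix"
      by auto
    show "model_to_brace (p \<otimes>\<^bsub>model_comp P_Fix\<^esub> q) = model_to_brace p \<otimes>\<^bsub>C\<^esub> model_to_brace q"
      unfolding pq using fg by (rule model_to_brace_comp)
  qed
  show "bij_betw model_to_brace (carrier (model_comp P_Fix)) (carrier C)"
    using bij_betw_model_to_brace by simp
qed

lemma skew_brace_iso_model:
  "skew_brace_iso P C (model_add P_Fix) (model_comp P_Fix) (inv_into (Fix \<times> UNIV) model_to_brace)"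
  using group.iso_set_sym[OF Fix.group_model_add model_to_brace_iso_add]
    group.iso_set_sym[OF Fix.group_model_comp model_to_brace_iso_comp]
  by (simp add: skew_brace_iso_def iso_def)

end

theorem mainTheorem14:
  shows
  "(\<forall>(P :: 'a monoid) (C :: 'a monoid).
      skew_brace P C \<and> finite (carrier P) \<and> card (Lambda_vertices P C) = 1 \<and>
      brace_ker P C \<inter> brace_Fix P C = {\<one>\<^bsub>P\<^esub>} \<longrightarrow>
        comm_group (P\<lparr>carrier := brace_Fix P C\<rparr>) \<and> odd (card (brace_Fix P C)) \<and>
        trivial_skew_brace (P\<lparr>carrier := brace_Fix P C\<rparr>) (C\<lparr>carrier := brace_Fix P C\<rparr>) \<and>
        (\<exists>h. skew_brace_iso P C (model_add (P\<lparr>carrier := brace_Fix P C\<rparr>))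
                                (model_comp (P\<lparr>carrier := brace_Fix P C\<rparr>)) h))
   \<and>
   (\<forall>(G :: 'b monoid).
      comm_group G \<and> finite (carrier G) \<and> odd (card (carrier G)) \<and> card (carrier G) > 1 \<longrightarrow>
        skew_brace (model_add G) (model_comp G) \<and>
        brace_Fix (model_add G) (model_comp G) = carrier G \<times> {False} \<and>
        brace_ker (model_add G) (model_comp G) = {\<one>\<^bsub>G\<^esub>} \<times> (UNIV :: bool set) \<and>
        card (Lambda_vertices (model_add G) (model_comp G)) = 1)"
proof (intro conjI allI impI; elim conjE)
  fix P C :: "'a monoid"
  assume "skew_brace P C" "finite (carrier P)" "card (Lambda_vertices P C) = 1"
    "brace_ker P C \<inter> brace_Fix P C = {\<one>\<^bsub>P\<^esub>}"
  then interpret one_vertex_skew_brace P C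
    by unfold_locales
  show "comm_group (P\<lparr>carrier := brace_Fix P C\<rparr>)"
    by (rule comm_group_Fix)
  show "odd (card (brace_Fix P C))"
    by (rule odd_card_Fix)
  show "trivial_skew_brace (P\<lparr>carrier := brace_Fix P C\<rparr>) (C\<lparr>carrier := brace_Fix P C\<rparr>)"
    by (rule trivial_skew_brace_Fix)
  show "\<exists>h. skew_brace_iso P C (model_add (P\<lparr>carrier := brace_Fix P C\<rparr>))
                              (model_comp (P\<lparr>carrier := brace_Fix P C\<rparr>)) h"
    using skew_brace_iso_model by blast
next
  fix G :: "'b monoid"
  assume "comm_group G" "odd (card (carrier G))" "card (carrier G) > 1"
  then interpret comm_group G
    by simp
  have odd: "odd (order G)"
    using \<open>odd (card (carrier G))\<close> by (simp add: order_def)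
  show "skew_brace (model_add G) (model_comp G)"
    by (rule skew_brace_model)
  show "brace_Fix (model_add G) (model_comp G) = carrier G \<times> {False}"
    using odd \<open>card (carrier G) > 1\<close> by (rule brace_Fix_model)
  show "brace_ker (model_add G) (model_comp G) = {\<one>\<^bsub>G\<^esub>} \<times> (UNIV :: bool set)"
    using odd by (rule brace_ker_model)
  show "card (Lambda_vertices (model_add G) (model_comp G)) = 1"
    using Lambda_vertices_model[OF odd \<open>card (carrier G) > 1\<close>] by simp
qed

end
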